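(* Let $0\le\alpha\le\beta\le\pi/2$, $P_1,P_2>0$, and define $\phi$ and $\mathcal R(\theta)$ as in the context. Then $$\max\Big\{R_1+R_2:(R_1,R_2)\in\bigcup_{\theta\in[\alpha,\beta]}\mathcal R(\theta)\Big\}=\mathcal C\big(\phi(\theta^* )\big),$$ where, with $T=\frac{P_1\sin2\alpha+P_2\sin2\beta}{P_1\cos2\alpha+P_2\cos2\beta}$ (assuming $P_1\cos2\alpha+P_2\cos2\beta\neq0$), $\theta^*=\frac12\arctan T$ if $T\ge0$ and $\theta^*=\frac12(\pi+\arctan T)$ if $T\le0$.
   Context: $\mathcal C(x)=\frac12\log_2(1+x)$, $\phi_1(\theta)=P_1\cos^2(\theta-\alpha)$, $\phi_2(\theta)=P_2\cos^2(\theta-\beta)$, $\phi=\phi_1+\phi_2$, and $\mathcal R(\theta)=\{(R_1,R_2)\ge0:R_1\le\mathcal C(\phi_1(\theta)),R_2\le\mathcal C(\phi_2(\theta)),R_1+R_2\le\mathcal C(\phi(\theta))\}$. (In the two-hop MAC, $P_i=\|\mathbf h_{0i}\|^2P_{S_i}$, $\alpha,\beta$ are the angles of the normalized source-to-relay channel vectors in an orthonormal basis of their span, and $\bigcup_{\theta\in[\alpha,\beta]}\mathcal R(\theta)$ is the first outer bound.) *)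

theory Defs
  imports Complex_Main
begin

definition cap :: "real \<Rightarrow> real" where
  "cap x = 1/2 * log 2 (1 + x)"

definition phi1 :: "real \<Rightarrow> real \<Rightarrow> real \<Rightarrow> real" where
  "phi1 P1 \<alpha> \<theta> = P1 * (cos (\<theta> - \<alpha>))\<^sup>2"

definition phi2 :: "real \<Rightarrow> real \<Rightarrow> real \<Rightarrow> real" where
  "phi2 P2 \<beta> \<theta> = P2 * (cos (\<theta> - \<beta>))\<^sup>2"

definition phi :: "real \<Rightarrow> real \<Rightarrow> real \<Rightarrow> real \<Rightarrow> real \<Rightarrow> real" where
  "phi P1 P2 \<alpha> \<beta> \<theta> = phi1 P1 \<alpha> \<theta> + phi2 P2 \<beta> \<theta>"

definition rate_region :: "real \<Rightarrow> real \<Rightarrow> real \<Rightarrow> real \<Rightarrow> real \<Rightarrow> (real \<times> real) set" where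
  "rate_region P1 P2 \<alpha> \<beta> \<theta> =
     {(R1, R2). R1 \<ge> 0 \<and> R2 \<ge> 0 \<and>
        R1 \<le> cap (phi1 P1 \<alpha> \<theta>) \<and> R2 \<le> cap (phi2 P2 \<beta> \<theta>) \<and>
        R1 + R2 \<le> cap (phi P1 P2 \<alpha> \<beta> \<theta>)}"

end

theory Submission imports Defs begin

text \<open>Writing \<open>(A, B) = P1 (cos 2\<alpha>, sin 2\<alpha>) + P2 (cos 2\<beta>, sin 2\<beta>)\<close>, the double-angle
  formula gives \<open>\<phi>(\<theta>) = (P1 + P2)/2 + (A cos 2\<theta> + B sin 2\<theta>)/2\<close>, which by Cauchy-Schwarz is
  largest when \<open>2\<theta>\<close> is the argument of \<open>(A, B)\<close>; this is \<open>2\<theta>*\<close>. A positive combination of two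
  unit vectors with arguments \<open>2\<alpha> \<le> 2\<beta>\<close> in \<open>[0, \<pi>]\<close> has its argument between them, so
  \<open>\<theta>* \<in> [\<alpha>, \<beta>]\<close>. Finally, the sum-rate bound \<open>\<C>(\<phi>)\<close> of a single region is attained at a corner
  point because \<open>\<C>\<close> is subadditive, and \<open>\<C>\<close> is monotone.\<close>

lemma cap_mono: "0 \<le> x \<Longrightarrow> x \<le> y \<Longrightarrow> cap x \<le> cap y"
  unfolding cap_def by simp

lemma cap_nonneg: "0 \<le> x \<Longrightarrow> 0 \<le> cap x"
  unfolding cap_def by simp

lemma cap_add_le:
  assumes "0 \<le> x" "0 \<le> y"
  shows "cap (x + y) \<le> cap x + cap y"
proof -
  have "log 2 (1 + (x + y)) \<le> log 2 ((1 + x) * (1 + y))"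
    using assms by (intro log_le_cancel_iff[THEN iffD2]) (auto simp: algebra_simps add_pos_nonneg)
  also have "\<dots> = log 2 (1 + x) + log 2 (1 + y)"
    using assms by (simp add: log_mult)
  finally show ?thesis unfolding cap_def by simp
qed

text \<open>The argument in \<open>[0, \<pi>]\<close> of a vector \<open>(A, B)\<close> of the closed upper half plane off the
  vertical axis.\<close>

definition phase :: "real \<Rightarrow> real \<Rightarrow> real" where
  "phase A B = (if A > 0 then arctan (B / A) else pi + arctan (B / A))"

lemma sqrt_one_plus_ratio_squared:
  fixes A B :: real
  assumes "A \<noteq> 0"
  shows "sqrt (1 + (B / A)\<^sup>2) = sqrt (A\<^sup>2 + B\<^sup>2) / \<bar>A\<bar>"
proof -
  have "1 + (B / A)\<^sup>2 = (A\<^sup>2 + B\<^sup>2) / A\<^sup>2"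
    using assms by (simp add: field_simps power2_eq_square)
  then show ?thesis by (simp add: real_sqrt_divide)
qed

lemma
  assumes "A \<noteq> 0"
  shows cos_phase: "cos (phase A B) = A / sqrt (A\<^sup>2 + B\<^sup>2)"
    and sin_phase: "sin (phase A B) = B / sqrt (A\<^sup>2 + B\<^sup>2)"
proof -
  have r: "sqrt (A\<^sup>2 + B\<^sup>2) > 0"
    using assms by (simp add: add_pos_nonneg)
  have c: "cos (arctan (B / A)) = \<bar>A\<bar> / sqrt (A\<^sup>2 + B\<^sup>2)"
    unfolding cos_arctan sqrt_one_plus_ratio_squared[OF assms] by simp
  have s: "sin (arctan (B / A)) = (B / A) * \<bar>A\<bar> / sqrt (A\<^sup>2 + B\<^sup>2)"
    unfolding sin_arctan sqrt_one_plus_ratio_squared[OF assms] by simp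
  show "cos (phase A B) = A / sqrt (A\<^sup>2 + B\<^sup>2)" "sin (phase A B) = B / sqrt (A\<^sup>2 + B\<^sup>2)"
    using assms r unfolding phase_def by (auto simp: c s abs_if field_simps)
qed

lemma phase_cases:
  assumes "A \<noteq> 0" "0 \<le> B"
  shows "(0 \<le> B / A \<and> phase A B = arctan (B / A)) \<or>
         (B / A \<le> 0 \<and> phase A B = pi + arctan (B / A))"
  using assms by (cases "A > 0") (auto simp: phase_def divide_nonneg_neg)

lemma phase_bounds:
  assumes "A \<noteq> 0" "0 \<le> B"
  shows "0 \<le> phase A B" "phase A B \<le> pi"
proof -
  have "- (pi / 2) < arctan (B / A)" "arctan (B / A) < pi / 2"
    by (rule arctan_lbound, rule arctan_ubound)
  moreover have "0 \<le> B / A \<Longrightarrow> 0 \<le> arctan (B / A)" "B / A \<le> 0 \<Longrightarrow> arctan (B / A) \<le> 0"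
    by (simp_all add: arctan_monotone'[of 0 "B / A", simplified]
                      arctan_monotone'[of "B / A" 0, simplified])
  ultimately show "0 \<le> phase A B" "phase A B \<le> pi"
    using phase_cases[OF assms] by auto
qed

lemma cos_sin_combination_le:
  fixes A B t :: real
  shows "A * cos t + B * sin t \<le> sqrt (A\<^sup>2 + B\<^sup>2)"
proof (rule real_le_rsqrt)
  have "(A * cos t + B * sin t)\<^sup>2 + (A * sin t - B * cos t)\<^sup>2
        = (A\<^sup>2 + B\<^sup>2) * ((cos t)\<^sup>2 + (sin t)\<^sup>2)"
    by algebra
  also have "\<dots> = A\<^sup>2 + B\<^sup>2"
    by simp
  finally show "(A * cos t + B * sin t)\<^sup>2 \<le> A\<^sup>2 + B\<^sup>2"
    using zero_le_power2[of "A * sin t - B * cos t"] by linarith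
qed

lemma cos_sin_combination_phase:
  assumes "A \<noteq> 0"
  shows "A * cos (phase A B) + B * sin (phase A B) = sqrt (A\<^sup>2 + B\<^sup>2)"
proof -
  have "A * cos (phase A B) + B * sin (phase A B) = (A\<^sup>2 + B\<^sup>2) / sqrt (A\<^sup>2 + B\<^sup>2)"
    unfolding cos_phase[OF assms] sin_phase[OF assms] by (simp add: power2_eq_square add_divide_distrib)
  also have "\<dots> = sqrt (A\<^sup>2 + B\<^sup>2)"
    by (metis real_div_sqrt sum_power2_ge_zero)
  finally show ?thesis .
qed

lemma nonneg_if_sin_nonneg:
  fixes x :: real
  assumes "- pi < x" "x \<le> pi" "0 \<le> sin x"
  shows "0 \<le> x"
proof (rule ccontr)
  assume "\<not> 0 \<le> x"
  then have "0 < sin (- x)"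
    using assms by (intro sin_gt_zero) auto
  then show False using assms by simp
qed

text \<open>Each of the two inequalities reduces to the sign of a sine: \<open>sin (\<psi> - u)\<close> and
  \<open>sin (v - \<psi>)\<close> are \<open>q sin (v - u) / r\<close> and \<open>p sin (v - u) / r\<close>.\<close>

lemma phase_between:
  fixes p q u v :: real
  assumes "0 < p" "0 < q" "0 \<le> u" "u \<le> v" "v \<le> pi"
  defines "A \<equiv> p * cos u + q * cos v" and "B \<equiv> p * sin u + q * sin v"
  assumes "A \<noteq> 0"
  shows "u \<le> phase A B \<and> phase A B \<le> v"
proof -
  define \<psi> r where "\<psi> = phase A B" and "r = sqrt (A\<^sup>2 + B\<^sup>2)"
  have "0 \<le> sin u" "0 \<le> sin v" "0 \<le> sin (v - u)"
    using assms(3-5) by (auto intro!: sin_ge_zero)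
  then have "0 \<le> B" using assms(1,2) by (simp add: B_def)
  have "0 < r" using \<open>A \<noteq> 0\<close> by (simp add: r_def add_pos_nonneg)
  note \<psi>_bounds = phase_bounds[OF \<open>A \<noteq> 0\<close> \<open>0 \<le> B\<close>, folded \<psi>_def]
  note cs = cos_phase[OF \<open>A \<noteq> 0\<close>, of B, folded \<psi>_def r_def]
            sin_phase[OF \<open>A \<noteq> 0\<close>, of B, folded \<psi>_def r_def]
  have "sin (\<psi> - u) = (B * cos u - A * sin u) / r" "sin (v - \<psi>) = (A * sin v - B * cos v) / r"
    by (simp_all add: sin_diff cs diff_divide_distrib mult.commute)
  moreover have "B * cos u - A * sin u = q * sin (v - u)" "A * sin v - B * cos v = p * sin (v - u)"
    by (simp_all add: A_def B_def sin_diff algebra_simps)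
  ultimately have sin_nonneg: "0 \<le> sin (\<psi> - u)" "0 \<le> sin (v - \<psi>)"
    using \<open>0 < r\<close> \<open>0 \<le> sin (v - u)\<close> assms(1,2) by simp_all
  have "\<psi> - u \<noteq> - pi"
  proof
    assume "\<psi> - u = - pi"
    then have "\<psi> = 0" "u = pi" "v = pi" using \<psi>_bounds assms(4,5) by auto
    then have "A < 0" "0 < A / r" using assms(1,2) cs(1) by (simp_all add: A_def)
    then show False using \<open>0 < r\<close> by (simp add: zero_less_divide_iff)
  qed
  moreover have "v - \<psi> \<noteq> - pi"
  proof
    assume "v - \<psi> = - pi"
    then have "\<psi> = pi" "u = 0" "v = 0" using \<psi>_bounds assms(3,4) by auto
    then have "0 < A" "A / r < 0" using assms(1,2) cs(1) by (simp_all add: A_def)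
    then show False using \<open>0 < r\<close> by (simp add: divide_less_0_iff)
  qed
  ultimately show ?thesis
    using nonneg_if_sin_nonneg[of "\<psi> - u"] nonneg_if_sin_nonneg[of "v - \<psi>"]
          sin_nonneg \<psi>_bounds assms(3-5)
    unfolding \<psi>_def by linarith
qed

lemma phi_double_angle:
  "phi P1 P2 \<alpha> \<beta> \<theta> = (P1 + P2) / 2 + ((P1 * cos (2 * \<alpha>) + P2 * cos (2 * \<beta>)) * cos (2 * \<theta>)
      + (P1 * sin (2 * \<alpha>) + P2 * sin (2 * \<beta>)) * sin (2 * \<theta>)) / 2"
proof -
  have cos_squared: "(cos x)\<^sup>2 = (1 + cos (2 * x)) / 2" for x :: real
    using cos_double_cos[of x] by simp
  show ?thesis
    unfolding phi_def phi1_def phi2_def cos_squared by (simp add: right_diff_distrib cos_diff field_simps)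
qed

lemma phi_le_phi_phase:
  fixes P1 P2 \<alpha> \<beta> :: real
  defines "A \<equiv> P1 * cos (2 * \<alpha>) + P2 * cos (2 * \<beta>)" and "B \<equiv> P1 * sin (2 * \<alpha>) + P2 * sin (2 * \<beta>)"
  assumes "A \<noteq> 0"
  shows "phi P1 P2 \<alpha> \<beta> \<theta> \<le> phi P1 P2 \<alpha> \<beta> (phase A B / 2)"
  using cos_sin_combination_le[of A "2 * \<theta>" B] cos_sin_combination_phase[OF \<open>A \<noteq> 0\<close>, of B]
  unfolding phi_double_angle A_def B_def by simp

lemma
  assumes "0 \<le> P1" "0 \<le> P2"
  shows phi1_nonneg: "0 \<le> phi1 P1 \<alpha> \<theta>"
    and phi2_nonneg: "0 \<le> phi2 P2 \<beta> \<theta>"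
    and phi_nonneg: "0 \<le> phi P1 P2 \<alpha> \<beta> \<theta>"
  using assms by (simp_all add: phi1_def phi2_def phi_def)

lemma sum_rate_le_cap_phi:
  "(R1, R2) \<in> rate_region P1 P2 \<alpha> \<beta> \<theta> \<Longrightarrow> R1 + R2 \<le> cap (phi P1 P2 \<alpha> \<beta> \<theta>)"
  unfolding rate_region_def by simp

lemma corner_point_in_rate_region:
  assumes "0 \<le> P1" "0 \<le> P2"
  shows "(cap (phi1 P1 \<alpha> \<theta>), cap (phi P1 P2 \<alpha> \<beta> \<theta>) - cap (phi1 P1 \<alpha> \<theta>))
           \<in> rate_region P1 P2 \<alpha> \<beta> \<theta>"
proof -
  have "0 \<le> phi1 P1 \<alpha> \<theta>" "0 \<le> phi2 P2 \<beta> \<theta>"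
    using assms by (rule phi1_nonneg, rule phi2_nonneg)
  then show ?thesis
    using cap_nonneg cap_mono[of "phi1 P1 \<alpha> \<theta>" "phi P1 P2 \<alpha> \<beta> \<theta>"]
          cap_add_le[of "phi1 P1 \<alpha> \<theta>" "phi2 P2 \<beta> \<theta>"]
    unfolding rate_region_def phi_def by simp
qed

theorem lemma5:
  fixes \<alpha> \<beta> P1 P2 :: real
  assumes "0 \<le> \<alpha>" "\<alpha> \<le> \<beta>" "\<beta> \<le> pi / 2" "P1 > 0" "P2 > 0"
    and "P1 * cos (2 * \<alpha>) + P2 * cos (2 * \<beta>) \<noteq> 0"
  defines "T \<equiv> (P1 * sin (2 * \<alpha>) + P2 * sin (2 * \<beta>)) / (P1 * cos (2 * \<alpha>) + P2 * cos (2 * \<beta>))"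
  defines "S \<equiv> {R1 + R2 | R1 R2. (R1, R2) \<in> (\<Union>\<theta>\<in>{\<alpha>..\<beta>}. rate_region P1 P2 \<alpha> \<beta> \<theta>)}"
  shows "\<exists>\<theta>s. ((T \<ge> 0 \<and> \<theta>s = arctan T / 2) \<or> (T \<le> 0 \<and> \<theta>s = (pi + arctan T) / 2)) \<and>
              cap (phi P1 P2 \<alpha> \<beta> \<theta>s) \<in> S \<and> (\<forall>s\<in>S. s \<le> cap (phi P1 P2 \<alpha> \<beta> \<theta>s))"
proof -
  define A B where "A = P1 * cos (2 * \<alpha>) + P2 * cos (2 * \<beta>)"
    and "B = P1 * sin (2 * \<alpha>) + P2 * sin (2 * \<beta>)"
  define \<theta>s where "\<theta>s = phase A B / 2"
  have "A \<noteq> 0" using assms(6) by (simp add: A_def)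
  have "0 \<le> sin (2 * \<alpha>)" "0 \<le> sin (2 * \<beta>)"
    using assms(1-3) by (intro sin_ge_zero; simp)+
  then have "0 \<le> B"
    using assms(4,5) by (simp add: B_def)
  then have "(T \<ge> 0 \<and> \<theta>s = arctan T / 2) \<or> (T \<le> 0 \<and> \<theta>s = (pi + arctan T) / 2)"
    using phase_cases[OF \<open>A \<noteq> 0\<close>] by (auto simp: T_def A_def B_def \<theta>s_def)
  moreover have "2 * \<alpha> \<le> phase A B \<and> phase A B \<le> 2 * \<beta>"
    using phase_between[of P1 P2 "2 * \<alpha>" "2 * \<beta>"] assms(1-5) \<open>A \<noteq> 0\<close> by (simp add: A_def B_def)
  then have "\<theta>s \<in> {\<alpha>..\<beta>}" by (simp add: \<theta>s_def)
  then have "cap (phi P1 P2 \<alpha> \<beta> \<theta>s) \<in> S"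
    using corner_point_in_rate_region[of P1 P2 \<alpha> \<theta>s \<beta>] assms(4,5) unfolding S_def by force
  moreover have "s \<le> cap (phi P1 P2 \<alpha> \<beta> \<theta>s)" if "s \<in> S" for s
  proof -
    obtain R1 R2 \<theta> where "s = R1 + R2" "(R1, R2) \<in> rate_region P1 P2 \<alpha> \<beta> \<theta>"
      using \<open>s \<in> S\<close> unfolding S_def by blast
    then have "s \<le> cap (phi P1 P2 \<alpha> \<beta> \<theta>)"
      by (simp add: sum_rate_le_cap_phi)
    also have "\<dots> \<le> cap (phi P1 P2 \<alpha> \<beta> \<theta>s)"
      using phi_le_phi_phase[of P1 \<alpha> P2 \<beta> \<theta>] \<open>A \<noteq> 0\<close> assms(4,5)
      by (intro cap_mono phi_nonneg) (simp_all add: \<theta>s_def A_def B_def)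
    finally show ?thesis .
  qed
  ultimately show ?thesis by blast
qed

end
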